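(* Let $\alpha>-1/2$. There is a constant $C$ depending only on $\alpha$ such that for every $\varepsilon\in(0,1)$ and every $(\varepsilon,\alpha)$-thin set $S\subset\mathbb{R}^+$ the following hold: if $a\ge1$ and $b-a\ge\frac1a$, then $$\mu_\alpha(S\cap[a,b])\le C\varepsilon\,\mu_\alpha([a,b]);$$ and if $b>1$, then $$\mu_\alpha(S\cap[0,b])\le C\varepsilon\,\mu_\alpha([0,b]).$$
   Context: Fix $\alpha>-1/2$ and let $d\mu_\alpha(x)=(2\pi)^{\alpha+1}x^{2\alpha+1}\,dx$ on $\mathbb{R}^+=[0,\infty)$. For $\varepsilon\in(0,1)$, a measurable set $S\subset\mathbb{R}^+$ is called $(\varepsilon,\alpha)$-thin if $\mu_\alpha(S\cap[x,x+1])\le\varepsilon\,\mu_\alpha([x,x+1])$ for all $0\le x\le1$, and $\mu_\alpha(S\cap[x,x+\frac1x])\le\varepsilon\,\mu_\alpha([x,x+\frac1x])$ for all $x\ge2$. *)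

theory Defs
  imports "HOL-Analysis.Analysis"
begin

definition mu :: "real \<Rightarrow> real measure" where
  "mu \<alpha> = density lborel
     (\<lambda>x. ennreal (indicator {0..} x * (2 * pi) powr (\<alpha> + 1) * x powr (2 * \<alpha> + 1)))"

definition thin :: "real \<Rightarrow> real \<Rightarrow> real set \<Rightarrow> bool" where
  "thin \<epsilon> \<alpha> S \<longleftrightarrow>
     S \<subseteq> {0..} \<and> S \<in> sets lborel \<and>
     (\<forall>x. 0 \<le> x \<and> x \<le> 1 \<longrightarrow>
        measure (mu \<alpha>) (S \<inter> {x..x+1}) \<le> \<epsilon> * measure (mu \<alpha>) {x..x+1}) \<and>
     (\<forall>x. x \<ge> 2 \<longrightarrow>
        measure (mu \<alpha>) (S \<inter> {x..x + 1/x}) \<le> \<epsilon> * measure (mu \<alpha>) {x..x + 1/x})"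

end

theory Submission imports Defs begin

text \<open>
  With \<open>q = 2\<alpha> + 2 > 1\<close>, the measure of an interval is \<open>\<mu>\<^sub>\<alpha>([x,y]) = F y - F x\<close> for
  \<open>F t = c t\<^sup>q\<close>. On \<open>[2,\<infinity>)\<close>, an interval \<open>[s,b]\<close> is covered by the chain of thin windows
  \<open>[s\<^sub>k, s\<^sub>k + 1/s\<^sub>k]\<close> starting at \<open>s\<^sub>0 = s\<close>; the estimates telescope to
  \<open>\<mu>\<^sub>\<alpha>(S \<inter> [s,b]) \<le> \<epsilon> (F t - F s)\<close> for some \<open>t \<le> b + 1/s\<close>, and \<open>[0,2]\<close> is covered by
  two windows of length 1. What remains is the elementary fact that overshooting \<open>b\<close> by at
  most \<open>1/a \<le> b - a\<close> (resp. \<open>1/2\<close>) increases \<open>t\<^sup>q - a\<^sup>q\<close> (resp. \<open>t\<^sup>q\<close>) by at most a factor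
  depending only on \<open>q\<close>.
\<close>

lemma has_integral_powr_interval:
  fixes p x y :: real
  assumes p: "p > -1" and x: "0 \<le> x" and xy: "x \<le> y"
  shows "((\<lambda>t. t powr p) has_integral (y powr (p+1) - x powr (p+1)) / (p+1)) {x..y}"
proof -
  have I0x: "((\<lambda>t. t powr p) has_integral (x powr (p+1) / (p+1))) {0..x}"
    using has_integral_powr_from_0[OF p x] .
  have I0y: "((\<lambda>t. t powr p) has_integral (y powr (p+1) / (p+1))) {0..y}"
    using has_integral_powr_from_0[OF p] x xy by simp
  have "(\<lambda>t. t powr p) integrable_on {x..y}"
    using integrable_subinterval_real[OF has_integral_integrable[OF I0y]] x by simp
  then obtain J where J: "((\<lambda>t. t powr p) has_integral J) {x..y}" by blast
  have "((\<lambda>t. t powr p) has_integral (x powr (p+1) / (p+1) + J)) {0..y}"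
    using has_integral_combine[OF x xy I0x J] by simp
  then have "x powr (p+1) / (p+1) + J = y powr (p+1) / (p+1)"
    using I0y by (rule has_integral_unique)
  then have "J = (y powr (p+1) - x powr (p+1)) / (p+1)" by (simp add: diff_divide_distrib)
  with J show ?thesis by simp
qed

definition mu_cdf :: "real \<Rightarrow> real \<Rightarrow> real" where
  "mu_cdf \<alpha> t = (2*pi) powr (\<alpha>+1) / (2*\<alpha>+2) * t powr (2*\<alpha>+2)"

lemma mu_cdf_0 [simp]: "mu_cdf \<alpha> 0 = 0"
  by (simp add: mu_cdf_def)

lemma mu_cdf_diff:
  "mu_cdf \<alpha> y - mu_cdf \<alpha> x = (2*pi) powr (\<alpha>+1) / (2*\<alpha>+2) * (y powr (2*\<alpha>+2) - x powr (2*\<alpha>+2))"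
  by (simp add: mu_cdf_def right_diff_distrib)

lemma mu_cdf_mono:
  assumes "\<alpha> > -1/2" "0 \<le> x" "x \<le> y"
  shows "mu_cdf \<alpha> x \<le> mu_cdf \<alpha> y"
  unfolding mu_cdf_def using assms by (intro mult_left_mono powr_mono2) auto

lemma sets_mu [simp]: "sets (mu \<alpha>) = sets lborel"
  by (simp add: mu_def)

lemma emeasure_mu_interval:
  assumes a: "\<alpha> > -1/2" and x: "0 \<le> x" and xy: "x \<le> y"
  shows "emeasure (mu \<alpha>) {x..y} = ennreal (mu_cdf \<alpha> y - mu_cdf \<alpha> x)"
proof -
  define c where "c = (2*pi) powr (\<alpha>+1)"
  have c: "c > 0" unfolding c_def by simp
  define g where "g = (\<lambda>t. if t \<in> {x..y} then c * t powr (2*\<alpha>+1) else 0)"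
  have "emeasure (mu \<alpha>) {x..y} =
      (\<integral>\<^sup>+ t. ennreal (indicator {0..} t * c * t powr (2*\<alpha>+1)) * indicator {x..y} t \<partial>lborel)"
    unfolding mu_def c_def by (subst emeasure_density) auto
  also have "\<dots> = (\<integral>\<^sup>+ t. ennreal (g t) \<partial>lborel)"
    using x by (intro nn_integral_cong) (auto simp: g_def indicator_def)
  also have "\<dots> = ennreal (mu_cdf \<alpha> y - mu_cdf \<alpha> x)"
  proof (rule nn_integral_has_integral_lborel)
    show "g \<in> borel_measurable borel" unfolding g_def by measurable
    show "0 \<le> g t" for t unfolding g_def using c by auto
    have "((\<lambda>t. c * t powr (2*\<alpha>+1)) has_integral
            c * ((y powr (2*\<alpha>+1+1) - x powr (2*\<alpha>+1+1)) / (2*\<alpha>+1+1))) {x..y}"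
      using a x xy by (intro has_integral_mult_right has_integral_powr_interval) auto
    then show "(g has_integral mu_cdf \<alpha> y - mu_cdf \<alpha> x) UNIV"
      unfolding g_def has_integral_restrict_UNIV mu_cdf_diff c_def by (simp add: add.assoc)
  qed
  finally show ?thesis .
qed

lemma measure_mu_interval:
  assumes "\<alpha> > -1/2" "0 \<le> x" "x \<le> y"
  shows "measure (mu \<alpha>) {x..y} = mu_cdf \<alpha> y - mu_cdf \<alpha> x"
  using emeasure_mu_interval[OF assms] mu_cdf_mono[OF assms] unfolding measure_def by simp

lemma measure_mu_mono:
  assumes a: "\<alpha> > -1/2" and u: "0 \<le> u" and AB: "A \<subseteq> B" "B \<subseteq> {u..v}"
    and sets: "A \<in> sets lborel" "B \<in> sets lborel"
  shows "measure (mu \<alpha>) A \<le> measure (mu \<alpha>) B"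
proof (rule measure_mono_fmeasurable[OF AB(1)])
  have "{u..v} \<in> fmeasurable (mu \<alpha>)"
    using emeasure_mu_interval[OF a u, of v] by (cases "u \<le> v") (auto intro: fmeasurableI)
  then show "B \<in> fmeasurable (mu \<alpha>)"
    using AB(2) sets(2) by (auto intro: fmeasurableI2)
qed (use sets in simp)

subsection \<open>Covering by thin windows\<close>

lemma thin_sets: "thin \<epsilon> \<alpha> S \<Longrightarrow> S \<in> sets lborel"
  unfolding thin_def by blast

lemma thin_window_small:
  assumes a: "\<alpha> > -1/2" and th: "thin \<epsilon> \<alpha> S" and x: "0 \<le> x" "x \<le> 1"
  shows "measure (mu \<alpha>) (S \<inter> {x..x+1}) \<le> \<epsilon> * (mu_cdf \<alpha> (x+1) - mu_cdf \<alpha> x)"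
  using th x measure_mu_interval[OF a x(1), of "x+1"] unfolding thin_def by auto

lemma thin_window_large:
  assumes a: "\<alpha> > -1/2" and th: "thin \<epsilon> \<alpha> S" and x: "2 \<le> x"
  shows "measure (mu \<alpha>) (S \<inter> {x..x+1/x}) \<le> \<epsilon> * (mu_cdf \<alpha> (x+1/x) - mu_cdf \<alpha> x)"
  using th x measure_mu_interval[OF a, of x "x+1/x"] unfolding thin_def by auto

lemma thin_short_interval:
  assumes a: "\<alpha> > -1/2" and th: "thin \<epsilon> \<alpha> S" and s: "2 \<le> s" and b: "b \<le> s + 1/s"
  shows "measure (mu \<alpha>) (S \<inter> {s..b}) \<le> \<epsilon> * (mu_cdf \<alpha> (s+1/s) - mu_cdf \<alpha> s)"
proof -
  have "measure (mu \<alpha>) (S \<inter> {s..b}) \<le> measure (mu \<alpha>) (S \<inter> {s..s+1/s})"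
    using s b thin_sets[OF th] by (intro measure_mu_mono[OF a, of s _ _ "s+1/s"]) auto
  also have "\<dots> \<le> \<epsilon> * (mu_cdf \<alpha> (s+1/s) - mu_cdf \<alpha> s)"
    by (rule thin_window_large[OF a th s])
  finally show ?thesis .
qed

lemma thin_chain_cover:
  assumes a: "\<alpha> > -1/2" and th: "thin \<epsilon> \<alpha> S" and s: "2 \<le> s" and sb: "s \<le> b"
  shows "\<exists>t. b \<le> t \<and> t \<le> b + 1/s \<and>
           measure (mu \<alpha>) (S \<inter> {s..b}) \<le> \<epsilon> * (mu_cdf \<alpha> t - mu_cdf \<alpha> s)"
proof -
  have Sm: "S \<in> sets lborel" using thin_sets[OF th] .
  \<comment> \<open>Each window \<open>[s, s+1/s]\<close> with \<open>s \<le> b\<close> has length at least \<open>1/b\<close>, so \<open>n\<close> windows suffice.\<close>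
  obtain n :: nat where "(b - s) * b \<le> n" using real_arch_simple by blast
  then have "b - s \<le> n / b" using s sb by (simp add: pos_le_divide_eq)
  then show ?thesis
    using s sb
  proof (induction n arbitrary: s)
    case 0
    have "0 \<le> 1/s" using 0 by simp
    then have "b \<le> s + 1/s" "s + 1/s \<le> b + 1/s" using 0 by auto
    with thin_short_interval[OF a th 0(2) this(1)] show ?case by blast
  next
    case (Suc n)
    show ?case
    proof (cases "b \<le> s + 1/s")
      case True
      then show ?thesis
        using thin_short_interval[OF a th Suc.prems(2) True] Suc.prems by (intro exI[of _ "s+1/s"]) auto
    next
      case False
      define s' where "s' = s + 1/s"
      have "1/b \<le> 1/s" using Suc.prems by (intro divide_left_mono) auto
      then have "b - s' \<le> n / b" using Suc.prems(1) by (simp add: s'_def add_divide_distrib)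
      moreover have s': "2 \<le> s'" "s' \<le> b" "s \<le> s'"
        using False Suc.prems unfolding s'_def by (auto intro: add_increasing2)
      ultimately obtain t where t: "b \<le> t" "t \<le> b + 1/s'"
          "measure (mu \<alpha>) (S \<inter> {s'..b}) \<le> \<epsilon> * (mu_cdf \<alpha> t - mu_cdf \<alpha> s')"
        using Suc.IH by blast
      have "1/s' \<le> 1/s" using s' Suc.prems by (intro divide_left_mono) auto
      have "measure (mu \<alpha>) (S \<inter> {s..b}) \<le> measure (mu \<alpha>) (S \<inter> {s..s'} \<union> S \<inter> {s'..b})"
        using Suc.prems Sm s' by (intro measure_mu_mono[OF a, of s _ _ b]) auto
      also have "\<dots> \<le> measure (mu \<alpha>) (S \<inter> {s..s'}) + measure (mu \<alpha>) (S \<inter> {s'..b})"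
        using Sm by (intro measure_Un_le) auto
      also have "\<dots> \<le> \<epsilon> * (mu_cdf \<alpha> s' - mu_cdf \<alpha> s) + \<epsilon> * (mu_cdf \<alpha> t - mu_cdf \<alpha> s')"
        using thin_window_large[OF a th Suc.prems(2)] t(3) unfolding s'_def by linarith
      also have "\<dots> = \<epsilon> * (mu_cdf \<alpha> t - mu_cdf \<alpha> s)" by (simp add: algebra_simps)
      finally show ?thesis using t \<open>1/s' \<le> 1/s\<close> by (intro exI[of _ t]) auto
    qed
  qed
qed

lemma thin_initial_cover:
  assumes a: "\<alpha> > -1/2" and th: "thin \<epsilon> \<alpha> S" and B: "2 \<le> B"
  shows "\<exists>t. B \<le> t \<and> t \<le> B + 1/2 \<and> measure (mu \<alpha>) (S \<inter> {0..B}) \<le> \<epsilon> * mu_cdf \<alpha> t"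
proof -
  have Sm: "S \<in> sets lborel" using thin_sets[OF th] .
  obtain t where t: "B \<le> t" "t \<le> B + 1/2"
      "measure (mu \<alpha>) (S \<inter> {2..B}) \<le> \<epsilon> * (mu_cdf \<alpha> t - mu_cdf \<alpha> 2)"
    using thin_chain_cover[OF a th _ B] by auto
  have "measure (mu \<alpha>) (S \<inter> {0..B}) \<le> measure (mu \<alpha>) (S \<inter> {0..1} \<union> S \<inter> {1..2} \<union> S \<inter> {2..B})"
    using B Sm by (intro measure_mu_mono[OF a, of 0 _ _ B]) auto
  also have "\<dots> \<le> measure (mu \<alpha>) (S \<inter> {0..1}) + measure (mu \<alpha>) (S \<inter> {1..2})
                 + measure (mu \<alpha>) (S \<inter> {2..B})"
    using Sm by (intro order.trans[OF measure_Un_le] add_right_mono measure_Un_le) auto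
  also have "\<dots> \<le> \<epsilon> * (mu_cdf \<alpha> 1 - mu_cdf \<alpha> 0) + \<epsilon> * (mu_cdf \<alpha> 2 - mu_cdf \<alpha> 1)
                 + \<epsilon> * (mu_cdf \<alpha> t - mu_cdf \<alpha> 2)"
    using thin_window_small[OF a th, of 0] thin_window_small[OF a th, of 1] t(3) by auto
  also have "\<dots> = \<epsilon> * mu_cdf \<alpha> t" by (simp add: algebra_simps)
  finally show ?thesis using t by blast
qed

subsection \<open>Elementary estimates for powers\<close>

lemma powr_le_mult_powr:
  fixes t c b q :: real
  assumes "0 \<le> t" "t \<le> c * b" "0 \<le> c" "0 \<le> b" "0 \<le> q"
  shows "t powr q \<le> c powr q * b powr q"
  using powr_mono2[of q t "c*b"] assms by (simp add: powr_mult)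

lemma powr_diff_ge_mult:
  fixes a b q :: real
  assumes a: "0 < a" and ab: "a \<le> b" and q: "1 \<le> q"
  shows "(b - a) * a powr (q-1) \<le> b powr q - a powr q"
proof -
  have "b * a powr (q-1) \<le> b * b powr (q-1)"
    using a ab q by (intro mult_left_mono powr_mono2) auto
  moreover have "b powr q = b * b powr (q-1)" "a powr q = a * a powr (q-1)"
    using a ab by (simp_all add: powr_mult_base)
  ultimately show ?thesis by (simp add: left_diff_distrib)
qed

lemma powr_diff_ge_half:
  fixes a b q :: real
  assumes a: "0 \<le> a" and ab: "2 * a \<le> b" and q: "1 \<le> q"
  shows "b powr q / 2 \<le> b powr q - a powr q"
proof -
  have "a powr q \<le> (b/2) powr q" using a ab q by (intro powr_mono2) auto
  also have "\<dots> = b powr q / 2 powr q" using a ab by (simp add: powr_divide)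
  also have "\<dots> \<le> b powr q / 2" using powr_mono[of 1 q 2] q by (intro divide_left_mono) auto
  finally show ?thesis by simp
qed

lemma powr_diff_le_mvt:
  fixes a t q :: real
  assumes a: "0 < a" and at: "a \<le> t" and q: "1 \<le> q"
  shows "t powr q - a powr q \<le> q * (t - a) * t powr (q-1)"
proof (cases "a = t")
  case False
  then have lt: "a < t" using at by simp
  have "\<exists>z. a < z \<and> z < t \<and> t powr q - a powr q = (t - a) * (q * z powr (q-1))"
    by (rule MVT2[OF lt]) (use a in \<open>auto intro: has_real_derivative_powr\<close>)
  then obtain z where z: "a < z" "z < t" "t powr q - a powr q = (t - a) * (q * z powr (q-1))"
    by blast
  have "z powr (q-1) \<le> t powr (q-1)" using z a q by (intro powr_mono2) auto
  then have "(t - a) * (q * z powr (q-1)) \<le> (t - a) * (q * t powr (q-1))"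
    using lt q by (intro mult_left_mono) auto
  then show ?thesis using z by (simp add: algebra_simps)
qed simp

definition cover_const :: "real \<Rightarrow> real" where
  "cover_const q = 2 * 5 powr q + 2 * q * 3 powr q"

lemma cover_const_ge:
  assumes "1 \<le> q"
  shows "2 * 5 powr q \<le> cover_const q" "2 * q * 3 powr q \<le> cover_const q"
  using assms unfolding cover_const_def by auto

lemma overshoot_bound:
  fixes a b t q :: real
  assumes q: "1 \<le> q" and a: "1 \<le> a" and b: "a + 1/a \<le> b" and t: "b \<le> t" "t \<le> b + 1/a"
  shows "t powr q - a powr q \<le> cover_const q * (b powr q - a powr q)"
proof -
  have a0: "0 < a" using a by simp
  have ia: "0 < 1/a" using a0 by simp
  have ab: "a \<le> b" using b ia by linarith
  show ?thesis
  proof (cases "2 * a \<le> b")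
    case True
    have h: "b powr q / 2 \<le> b powr q - a powr q" using powr_diff_ge_half[OF _ True q] a by simp
    have "t powr q \<le> 5 powr q * b powr q"
      by (rule powr_le_mult_powr) (use a b t q ia in linarith)+
    also have "\<dots> \<le> 5 powr q * (2 * (b powr q - a powr q))" using h by (intro mult_left_mono) auto
    also have "\<dots> = (2 * 5 powr q) * (b powr q - a powr q)" by simp
    also have "\<dots> \<le> cover_const q * (b powr q - a powr q)"
      using cover_const_ge(1)[OF q] h powr_ge_zero[of b q] by (intro mult_right_mono) linarith+
    finally show ?thesis using powr_ge_zero[of a q] by linarith
  next
    case False
    have ta: "t - a \<le> 2 * (b - a)" using t b by (smt (verit))
    have "t \<le> 3 * a" using ta False by (smt (verit))
    then have "t powr (q-1) \<le> 3 powr (q-1) * a powr (q-1)"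
      by (rule powr_le_mult_powr[rotated]) (use a0 ab t q in linarith)+
    also have "\<dots> \<le> 3 powr q * a powr (q-1)" by (intro mult_right_mono powr_mono) auto
    finally have t3: "t powr (q-1) \<le> 3 powr q * a powr (q-1)" .
    have "t powr q - a powr q \<le> q * (t - a) * t powr (q-1)"
      by (rule powr_diff_le_mvt[OF a0 _ q]) (use ab t in linarith)
    also have "\<dots> \<le> q * (2 * (b - a)) * (3 powr q * a powr (q-1))"
    proof (rule mult_mono)
      show "q * (t - a) \<le> q * (2 * (b - a))" using ta q by (intro mult_left_mono) auto
    qed (use t3 q ab in auto)
    also have "\<dots> = (2 * q * 3 powr q) * ((b - a) * a powr (q-1))" by (simp add: algebra_simps)
    also have "\<dots> \<le> (2 * q * 3 powr q) * (b powr q - a powr q)"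
      using powr_diff_ge_mult[OF a0 ab q] q by (intro mult_left_mono) auto
    also have "\<dots> \<le> cover_const q * (b powr q - a powr q)"
      using cover_const_ge(2)[OF q] powr_mono2[of q a b] q ab a0 by (intro mult_right_mono) linarith+
    finally show ?thesis .
  qed
qed

lemma initial_overshoot_bound:
  fixes a b t q :: real
  assumes q: "1 \<le> q" and a: "1 \<le> a" "a \<le> 2" and b: "a + 1/a \<le> b" "2 \<le> b"
    and t: "0 \<le> t" "t \<le> b + 1/2"
  shows "t powr q \<le> cover_const q * (b powr q - a powr q)"
proof -
  obtain M where M: "t powr q \<le> 5 powr q * M" "M \<le> 2 * (b powr q - a powr q)"
  proof (cases "4 \<le> b")
    case True
    then show ?thesis
      using that[of "b powr q"] t q a powr_diff_ge_half[of a b q] powr_le_mult_powr[of t 5 b q]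
      by auto
  next
    case False
    have "1/2 \<le> 1/a" using a by (intro divide_left_mono) auto
    then have "1/2 \<le> b - a" using b by linarith
    then have "1/2 * 1 \<le> (b - a) * a powr (q-1)"
      using a q ge_one_powr_ge_zero[of a "q-1"] by (intro mult_mono) auto
    moreover have "t powr q \<le> 5 powr q" using t False q by (intro powr_mono2) auto
    ultimately show ?thesis
      using that[of 1] powr_diff_ge_mult[of a b q] a b q by auto
  qed
  have "t powr q \<le> 5 powr q * (2 * (b powr q - a powr q))"
    using M(1) order.trans[OF M(1) mult_left_mono[OF M(2)]] by simp
  also have "\<dots> = (2 * 5 powr q) * (b powr q - a powr q)" by simp
  also have "\<dots> \<le> cover_const q * (b powr q - a powr q)"
    using cover_const_ge(1)[OF q] powr_mono2[of q a b] a b q by (intro mult_right_mono) auto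
  finally show ?thesis .
qed

lemma thin_interval_bound:
  assumes a: "\<alpha> > -1/2" and th: "thin \<epsilon> \<alpha> S" and e: "0 \<le> \<epsilon>"
    and a1: "1 \<le> a" and b: "a + 1/a \<le> b"
  shows "measure (mu \<alpha>) (S \<inter> {a..b}) \<le> cover_const (2*\<alpha>+2) * \<epsilon> * measure (mu \<alpha>) {a..b}"
proof -
  define q where "q = 2*\<alpha>+2"
  define k where "k = (2*pi) powr (\<alpha>+1) / (2*\<alpha>+2)"
  have q: "1 \<le> q" and k: "0 \<le> k" using a unfolding q_def k_def by auto
  have F: "mu_cdf \<alpha> t = k * t powr q" for t unfolding mu_cdf_def k_def q_def ..
  have "0 < 1/a" using a1 by simp
  then have ab: "a \<le> b" using b by linarith
  have "\<exists>X. measure (mu \<alpha>) (S \<inter> {a..b}) \<le> \<epsilon> * (k * X) \<and> X \<le> cover_const q * (b powr q - a powr q)"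
  proof (cases "2 \<le> a")
    case True
    obtain t where t: "b \<le> t" "t \<le> b + 1/a"
        "measure (mu \<alpha>) (S \<inter> {a..b}) \<le> \<epsilon> * (mu_cdf \<alpha> t - mu_cdf \<alpha> a)"
      using thin_chain_cover[OF a th True ab] by blast
    have "\<epsilon> * (mu_cdf \<alpha> t - mu_cdf \<alpha> a) = \<epsilon> * (k * (t powr q - a powr q))"
      unfolding F by (simp add: right_diff_distrib)
    then show ?thesis using t(3) overshoot_bound[OF q a1 b t(1,2)] by auto
  next
    case False
    have "2 * a \<le> a * a + 1" using zero_le_power2[of "a - 1"] by (simp add: power2_eq_square algebra_simps)
    then have "2 \<le> a + 1/a" using a1 by (simp add: field_simps)
    then have b2: "2 \<le> b" using b by linarith
    obtain t where t: "b \<le> t" "t \<le> b + 1/2" "measure (mu \<alpha>) (S \<inter> {0..b}) \<le> \<epsilon> * mu_cdf \<alpha> t"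
      using thin_initial_cover[OF a th b2] by blast
    have "measure (mu \<alpha>) (S \<inter> {a..b}) \<le> measure (mu \<alpha>) (S \<inter> {0..b})"
      using a1 thin_sets[OF th] by (intro measure_mu_mono[OF a, of 0 _ _ b]) auto
    then have "measure (mu \<alpha>) (S \<inter> {a..b}) \<le> \<epsilon> * (k * t powr q)"
      using t(3) unfolding F by linarith
    moreover have "t powr q \<le> cover_const q * (b powr q - a powr q)"
      by (rule initial_overshoot_bound[OF q a1 _ b b2 _ t(2)]) (use False b2 t(1) in linarith)+
    ultimately show ?thesis by blast
  qed
  then obtain X where X: "measure (mu \<alpha>) (S \<inter> {a..b}) \<le> \<epsilon> * (k * X)"
      "X \<le> cover_const q * (b powr q - a powr q)"
    by blast
  have D: "measure (mu \<alpha>) {a..b} = k * (b powr q - a powr q)"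
    using measure_mu_interval[OF a _ ab] a1 unfolding F by (simp add: right_diff_distrib)
  note X(1)
  also have "\<epsilon> * (k * X) \<le> \<epsilon> * (k * (cover_const q * (b powr q - a powr q)))"
    using X(2) e k by (intro mult_left_mono) auto
  also have "\<dots> = cover_const q * \<epsilon> * measure (mu \<alpha>) {a..b}"
    unfolding D by (simp add: mult_ac)
  finally show ?thesis unfolding q_def .
qed

lemma thin_initial_bound:
  assumes a: "\<alpha> > -1/2" and th: "thin \<epsilon> \<alpha> S" and e: "0 \<le> \<epsilon>" and b: "1 < b"
  shows "measure (mu \<alpha>) (S \<inter> {0..b}) \<le> cover_const (2*\<alpha>+2) * \<epsilon> * measure (mu \<alpha>) {0..b}"
proof -
  define q where "q = 2*\<alpha>+2"
  define k where "k = (2*pi) powr (\<alpha>+1) / (2*\<alpha>+2)"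
  have q: "1 \<le> q" and k: "0 \<le> k" using a unfolding q_def k_def by auto
  have F: "mu_cdf \<alpha> t = k * t powr q" for t unfolding mu_cdf_def k_def q_def ..
  obtain t where t: "max b 2 \<le> t" "t \<le> max b 2 + 1/2"
      "measure (mu \<alpha>) (S \<inter> {0..max b 2}) \<le> \<epsilon> * mu_cdf \<alpha> t"
    using thin_initial_cover[OF a th, of "max b 2"] by auto
  have "measure (mu \<alpha>) (S \<inter> {0..b}) \<le> measure (mu \<alpha>) (S \<inter> {0..max b 2})"
    using thin_sets[OF th] by (intro measure_mu_mono[OF a, of 0 _ _ "max b 2"]) auto
  also have "\<dots> \<le> \<epsilon> * (k * t powr q)" using t(3) unfolding F .
  also have "\<dots> \<le> \<epsilon> * (k * (cover_const q * b powr q))"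
  proof (intro mult_left_mono)
    have "max b 2 \<le> 2 * b" "2 \<le> max b 2" using b by auto
    then have "t powr q \<le> 5 powr q * b powr q"
      by (intro powr_le_mult_powr) (use t(1,2) b q in linarith)+
    also have "\<dots> \<le> cover_const q * b powr q"
      by (intro mult_right_mono) (use cover_const_ge(1)[OF q] powr_ge_zero[of 5 q] in linarith, simp)
    finally show "t powr q \<le> cover_const q * b powr q" .
  qed (use e k in auto)
  also have "\<dots> = cover_const q * \<epsilon> * measure (mu \<alpha>) {0..b}"
    using measure_mu_interval[OF a, of 0 b] b unfolding F by (simp add: ac_simps)
  finally show ?thesis unfolding q_def .
qed

theorem lemma5p2:
  fixes \<alpha> :: real
  assumes "\<alpha> > -1/2"
  shows "\<exists>C::real. \<forall>\<epsilon> S. 0 < \<epsilon> \<and> \<epsilon> < 1 \<and> thin \<epsilon> \<alpha> S \<longrightarrow>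
           (\<forall>a b. a \<ge> 1 \<and> b - a \<ge> 1/a \<longrightarrow>
              measure (mu \<alpha>) (S \<inter> {a..b}) \<le> C * \<epsilon> * measure (mu \<alpha>) {a..b}) \<and>
           (\<forall>b. b > 1 \<longrightarrow>
              measure (mu \<alpha>) (S \<inter> {0..b}) \<le> C * \<epsilon> * measure (mu \<alpha>) {0..b})"
  using thin_interval_bound[OF assms] thin_initial_bound[OF assms]
  by (intro exI[of _ "cover_const (2*\<alpha>+2)"]) (auto simp: algebra_simps)

end
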